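(* In the setting of the two-instance Bernoulli lower bound (instances $\mathcal P_1$: arms $\mathrm{Ber}(p_0),\mathrm{Ber}(p_0-\epsilon)$; $\mathcal P_2$: swapped; approx-oracle allocation $\tilde T_i^*=n\,\mathfrak c(q_i)^{1/\alpha}/(\mathfrak c(q_1)^{1/\alpha}+\mathfrak c(q_2)^{1/\alpha})$ with $q_i$ the parameter of arm $i$), take $p_0=3/4$ and $\epsilon=1/(4\sqrt n)$, and let $(\mathfrak c,\alpha)$ be any one of the following: (i) $\mathfrak c(p)=1-p^2-(1-p)^2$, $\alpha=1$ ($\ell_2^2$-distance); (ii) $\mathfrak c(p)=2\sqrt{p(1-p)}$, $\alpha=1/2$ ($\ell_1$-distance); (iii) $\mathfrak c(p)=\sqrt{1/p-1}+\sqrt{1/(1-p)-1}$, $\alpha=1/2$ (separation distance). Then there is an absolute constant $C>0$ such that for all $n\ge2$ and every adaptive allocation scheme with budget $n$, $$\max_{\mathcal P\in\{\mathcal P_1,\mathcal P_2\}}\ \max_{i\in\{1,2\}}\ \mathbb E_{\mathcal P}\big[|T_i-\tilde T_i^*|\big]\;\ge\;C\sqrt n .$$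
   Context: An adaptive allocation scheme with budget $n$ selects at each round $t=1,\dots,n$ one of two arms based on the past selections and observations; the selected arm yields an independent Bernoulli draw with its parameter. $T_i$ is the total number of pulls of arm $i$ ($T_1+T_2=n$), and $\mathbb E_{\mathcal P}$ is expectation under instance $\mathcal P$. *)

theory Defs
  imports "HOL-Probability.Probability"
begin

text \<open>Arms are encoded as booleans: True = arm 1, False = arm 2.
  A history is the list of (selected arm, observed Bernoulli outcome) pairs.
  An adaptive allocation scheme (possibly randomized) is a map from the past
  history to the probability of selecting arm 1 in the next round
  (values outside [0,1] are clamped by bernoulli_pmf).\<close>

type_synonym history = "(bool \<times> bool) list"
type_synonym policy = "history \<Rightarrow> real"

primrec hist :: "policy \<Rightarrow> (bool \<Rightarrow> real) \<Rightarrow> nat \<Rightarrow> history pmf" where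
  "hist \<pi> q 0 = return_pmf []"
| "hist \<pi> q (Suc t) =
     bind_pmf (hist \<pi> q t) (\<lambda>h.
     bind_pmf (bernoulli_pmf (\<pi> h)) (\<lambda>a.
     bind_pmf (bernoulli_pmf (q a)) (\<lambda>y.
     return_pmf (h @ [(a, y)]))))"

definition pulls :: "bool \<Rightarrow> history \<Rightarrow> nat" where
  "pulls i h = length (filter (\<lambda>(a, _). a = i) h)"

definition oracle_alloc :: "(real \<Rightarrow> real) \<Rightarrow> real \<Rightarrow> nat \<Rightarrow> (bool \<Rightarrow> real) \<Rightarrow> bool \<Rightarrow> real" where
  "oracle_alloc c \<alpha> n q i =
     real n * c (q i) powr (1 / \<alpha>) /
     (c (q True) powr (1 / \<alpha>) + c (q False) powr (1 / \<alpha>))"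

definition alloc_err :: "(real \<Rightarrow> real) \<Rightarrow> real \<Rightarrow> nat \<Rightarrow> policy \<Rightarrow> (bool \<Rightarrow> real) \<Rightarrow> bool \<Rightarrow> real" where
  "alloc_err c \<alpha> n \<pi> q i =
     measure_pmf.expectation (hist \<pi> q n)
       (\<lambda>h. \<bar>real (pulls i h) - oracle_alloc c \<alpha> n q i\<bar>)"

definition inst1 :: "nat \<Rightarrow> bool \<Rightarrow> real" where
  "inst1 n = (\<lambda>i. if i then 3/4 else 3/4 - 1 / (4 * sqrt (real n)))"

definition inst2 :: "nat \<Rightarrow> bool \<Rightarrow> real" where
  "inst2 n = (\<lambda>i. if i then 3/4 - 1 / (4 * sqrt (real n)) else 3/4)"

end

theory Submission
  imports Defs
begin

text \<open>Two-point method. The histories generated by a fixed policy under the two instances have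
  Bhattacharyya coefficient \<open>\<beta>\<^sup>n\<close>, where \<open>\<beta> \<ge> 1 - 2\<epsilon>\<^sup>2\<close> is the coefficient of the
  arms \<open>Ber(3/4)\<close> and \<open>Ber(3/4 - \<epsilon>)\<close>; for \<open>\<epsilon> = 1/(4 sqrt n)\<close> it stays bounded below, so by
  Le Cam's inequality the two history laws overlap by a constant amount. On the other hand, for
  each of the three costs the weight \<open>c p powr (1/\<alpha>)\<close> is proportional to \<open>p(1 - p)\<close> or to its
  inverse, so swapping the arms moves the oracle allocation of arm 1 by about \<open>n\<epsilon> \<asymp> sqrt n\<close>;
  no value of \<open>T\<^sub>1\<close> is close to both targets on the overlap.\<close>

abbreviation histories :: "nat \<Rightarrow> history set" where
  "histories t \<equiv> {h. length h = t}"

lemma finite_histories: "finite (histories t)"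
  using finite_lists_length_eq[of "UNIV :: (bool \<times> bool) set" t] by simp

lemma set_pmf_hist_subset: "set_pmf (hist \<pi> q t) \<subseteq> histories t"
  by (induction t) auto

lemma sum_histories_Suc:
  "(\<Sum>h\<in>histories (Suc t). f h) = (\<Sum>h\<in>histories t. \<Sum>a\<in>UNIV. \<Sum>y\<in>UNIV. f (h @ [(a, y)]))"
proof -
  have img: "histories (Suc t) = (\<lambda>(h, x). h @ [x]) ` (histories t \<times> UNIV)"
  proof (intro equalityI subsetI)
    fix h assume "h \<in> histories (Suc t)"
    then have "h = butlast h @ [last h]" "butlast h \<in> histories t"
      by (auto intro!: append_butlast_last_id[symmetric])
    then show "h \<in> (\<lambda>(h, x). h @ [x]) ` (histories t \<times> UNIV)" by force
  qed auto
  have "inj_on (\<lambda>(h :: history, x). h @ [x]) (histories t \<times> UNIV)"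
    by (auto simp: inj_on_def)
  then have "(\<Sum>h\<in>histories (Suc t). f h) = (\<Sum>h\<in>histories t. \<Sum>x\<in>UNIV. f (h @ [x]))"
    by (simp add: img sum.reindex sum.cartesian_product case_prod_unfold)
  also have "\<dots> = (\<Sum>h\<in>histories t. \<Sum>a\<in>UNIV. \<Sum>y\<in>UNIV. f (h @ [(a, y)]))"
    by (simp add: sum.cartesian_product UNIV_Times_UNIV[symmetric] del: UNIV_Times_UNIV)
  finally show ?thesis .
qed

lemma pmf_bind_unique:
  assumes "\<And>x'. x' \<in> set_pmf M \<Longrightarrow> z \<in> set_pmf (f x') \<Longrightarrow> x' = x"
  shows "pmf (bind_pmf M f) z = pmf M x * pmf (f x) z"
  unfolding pmf_bind
  by (subst integral_measure_pmf_real[where A = "{x}"]) (auto simp: set_pmf_iff assms)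

lemma pmf_hist_snoc:
  "pmf (hist \<pi> q (Suc t)) (h @ [(a, y)]) =
     pmf (hist \<pi> q t) h * pmf (bernoulli_pmf (\<pi> h)) a * pmf (bernoulli_pmf (q a)) y"
proof -
  have "pmf (hist \<pi> q (Suc t)) (h @ [(a, y)]) = pmf (hist \<pi> q t) h *
     pmf (bernoulli_pmf (\<pi> h) \<bind> (\<lambda>a. bernoulli_pmf (q a) \<bind> (\<lambda>y. return_pmf (h @ [(a, y)]))))
       (h @ [(a, y)])"
    unfolding hist.simps by (rule pmf_bind_unique) auto
  also have "pmf (bernoulli_pmf (\<pi> h) \<bind> (\<lambda>a. bernoulli_pmf (q a) \<bind> (\<lambda>y. return_pmf (h @ [(a, y)]))))
       (h @ [(a, y)]) = pmf (bernoulli_pmf (\<pi> h)) a * pmf (bernoulli_pmf (q a)) y"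
    by (subst pmf_bind_unique[where x = a], simp,
        subst pmf_bind_unique[where x = y]) auto
  finally show ?thesis by (simp only: mult.assoc)
qed

declare hist.simps(2) [simp del]

definition bhattacharyya :: "'a set \<Rightarrow> ('a \<Rightarrow> real) \<Rightarrow> ('a \<Rightarrow> real) \<Rightarrow> real" where
  "bhattacharyya A P Q = (\<Sum>x\<in>A. sqrt (P x * Q x))"

lemma bhattacharyya_commute: "bhattacharyya A P Q = bhattacharyya A Q P"
  by (simp add: bhattacharyya_def mult.commute)

lemma sum_bernoulli_pmf: "(\<Sum>a\<in>UNIV. pmf (bernoulli_pmf p) a * f) = f"
  using sum_pmf_eq_1[of UNIV "bernoulli_pmf p"] by (simp add: sum_distrib_right[symmetric])

lemma bhattacharyya_hist:
  assumes arm: "\<And>a. bhattacharyya UNIV (pmf (bernoulli_pmf (q1 a))) (pmf (bernoulli_pmf (q2 a))) = \<beta>"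
  shows "bhattacharyya (histories t) (pmf (hist \<pi> q1 t)) (pmf (hist \<pi> q2 t)) = \<beta> ^ t"
proof (induction t)
  case 0
  then show ?case by (simp add: bhattacharyya_def)
next
  case (Suc t)
  let ?B = "\<lambda>h. sqrt (pmf (hist \<pi> q1 t) h * pmf (hist \<pi> q2 t) h)"
  have snoc: "sqrt (pmf (hist \<pi> q1 (Suc t)) (h @ [(a, y)]) * pmf (hist \<pi> q2 (Suc t)) (h @ [(a, y)]))
      = ?B h * pmf (bernoulli_pmf (\<pi> h)) a *
        sqrt (pmf (bernoulli_pmf (q1 a)) y * pmf (bernoulli_pmf (q2 a)) y)" for h a y
  proof -
    have "pmf (hist \<pi> q1 (Suc t)) (h @ [(a, y)]) * pmf (hist \<pi> q2 (Suc t)) (h @ [(a, y)])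
        = (pmf (hist \<pi> q1 t) h * pmf (hist \<pi> q2 t) h) *
          (pmf (bernoulli_pmf (\<pi> h)) a * pmf (bernoulli_pmf (\<pi> h)) a) *
          (pmf (bernoulli_pmf (q1 a)) y * pmf (bernoulli_pmf (q2 a)) y)"
      by (simp only: pmf_hist_snoc ac_simps)
    then show ?thesis by (simp only: real_sqrt_mult real_sqrt_mult_self abs_of_nonneg pmf_nonneg)
  qed
  have "bhattacharyya (histories (Suc t)) (pmf (hist \<pi> q1 (Suc t))) (pmf (hist \<pi> q2 (Suc t)))
      = (\<Sum>h\<in>histories t. \<Sum>a\<in>UNIV. pmf (bernoulli_pmf (\<pi> h)) a * (?B h *
          bhattacharyya UNIV (pmf (bernoulli_pmf (q1 a))) (pmf (bernoulli_pmf (q2 a)))))"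
    by (simp add: bhattacharyya_def sum_histories_Suc snoc sum_distrib_left ac_simps)
  also have "\<dots> = (\<Sum>h\<in>histories t. ?B h) * \<beta>"
    by (simp add: arm sum_bernoulli_pmf sum_distrib_right)
  finally show ?case
    using Suc.IH by (simp add: bhattacharyya_def)
qed

text \<open>Le Cam's inequality, via Cauchy--Schwarz applied to
  \<open>sqrt (P x * Q x) = sqrt (min (P x) (Q x)) * sqrt (max (P x) (Q x))\<close>.\<close>
lemma bhattacharyya_sq_le_overlap:
  assumes "finite A" "\<And>x. P x \<ge> 0" "\<And>x. Q x \<ge> 0"
    and "(\<Sum>x\<in>A. P x) = 1" "(\<Sum>x\<in>A. Q x) = 1"
  shows "(bhattacharyya A P Q)\<^sup>2 / 2 \<le> (\<Sum>x\<in>A. min (P x) (Q x))"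
proof -
  have "sqrt (P x * Q x) = sqrt (min (P x) (Q x)) * sqrt (max (P x) (Q x))" for x
    by (simp add: real_sqrt_mult[symmetric] min_def max_def mult.commute)
  then have "(bhattacharyya A P Q)\<^sup>2 \<le> (\<Sum>x\<in>A. min (P x) (Q x)) * (\<Sum>x\<in>A. max (P x) (Q x))"
    using Cauchy_Schwarz_ineq_sum[of "\<lambda>x. sqrt (min (P x) (Q x))" "\<lambda>x. sqrt (max (P x) (Q x))" A]
      assms(2,3) by (simp add: bhattacharyya_def le_max_iff_disj)
  also have "\<dots> \<le> (\<Sum>x\<in>A. min (P x) (Q x)) * 2"
  proof (rule mult_left_mono)
    have "(\<Sum>x\<in>A. max (P x) (Q x)) \<le> (\<Sum>x\<in>A. P x + Q x)"
      using assms(2,3) by (intro sum_mono) auto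
    then show "(\<Sum>x\<in>A. max (P x) (Q x)) \<le> 2"
      using assms(4,5) by (simp add: sum.distrib)
  qed (use assms(2,3) in \<open>auto intro: sum_nonneg\<close>)
  finally show ?thesis by simp
qed

lemma two_point_lower_bound:
  fixes M1 M2 :: "'a pmf" and T :: "'a \<Rightarrow> real"
  assumes A: "finite A" "set_pmf M1 \<subseteq> A" "set_pmf M2 \<subseteq> A"
  shows "\<bar>a1 - a2\<bar> * (bhattacharyya A (pmf M1) (pmf M2))\<^sup>2 / 2 \<le>
    measure_pmf.expectation M1 (\<lambda>x. \<bar>T x - a1\<bar>) + measure_pmf.expectation M2 (\<lambda>x. \<bar>T x - a2\<bar>)"
proof -
  have "(bhattacharyya A (pmf M1) (pmf M2))\<^sup>2 / 2 \<le> (\<Sum>x\<in>A. min (pmf M1 x) (pmf M2 x))"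
    by (rule bhattacharyya_sq_le_overlap[OF A(1) pmf_nonneg pmf_nonneg
          sum_pmf_eq_1[OF A(1,2)] sum_pmf_eq_1[OF A(1,3)]])
  then have "\<bar>a1 - a2\<bar> * ((bhattacharyya A (pmf M1) (pmf M2))\<^sup>2 / 2)
      \<le> \<bar>a1 - a2\<bar> * (\<Sum>x\<in>A. min (pmf M1 x) (pmf M2 x))"
    by (rule mult_left_mono) simp
  also have "\<dots> \<le> (\<Sum>x\<in>A. \<bar>T x - a1\<bar> * pmf M1 x + \<bar>T x - a2\<bar> * pmf M2 x)"
    unfolding sum_distrib_left
  proof (rule sum_mono)
    fix x
    have "\<bar>a1 - a2\<bar> * min (pmf M1 x) (pmf M2 x)
        \<le> (\<bar>T x - a1\<bar> + \<bar>T x - a2\<bar>) * min (pmf M1 x) (pmf M2 x)"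
      by (rule mult_right_mono) (auto simp: abs_if)
    also have "\<dots> \<le> \<bar>T x - a1\<bar> * pmf M1 x + \<bar>T x - a2\<bar> * pmf M2 x"
      unfolding distrib_right by (intro add_mono mult_left_mono) auto
    finally show "\<bar>a1 - a2\<bar> * min (pmf M1 x) (pmf M2 x)
        \<le> \<bar>T x - a1\<bar> * pmf M1 x + \<bar>T x - a2\<bar> * pmf M2 x" .
  qed
  also have "\<dots> = measure_pmf.expectation M1 (\<lambda>x. \<bar>T x - a1\<bar>) + measure_pmf.expectation M2 (\<lambda>x. \<bar>T x - a2\<bar>)"
    using A by (simp add: integral_measure_pmf_real[where A = A] sum.distrib subset_iff)
  finally show ?thesis by simp
qed

lemma harmonic_mean_le_sqrt:
  fixes x y :: real
  assumes "x > 0" "y > 0"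
  shows "2 * x * y / (x + y) \<le> sqrt (x * y)"
proof -
  have "x * y = sqrt (x * y) * sqrt (x * y)"
    using assms by simp
  also have "\<dots> \<le> sqrt (x * y) * ((x + y) / 2)"
    using arith_geo_mean_sqrt[of x y] assms by (intro mult_left_mono) auto
  finally show ?thesis
    using assms by (simp add: divide_le_eq mult_ac)
qed

lemma bhattacharyya_bernoulli_ge:
  fixes e :: real
  assumes e: "0 < e" "e \<le> 1/4"
  shows "1 - 2 * e\<^sup>2 \<le> bhattacharyya UNIV (pmf (bernoulli_pmf (3/4))) (pmf (bernoulli_pmf (3/4 - e)))"
proof -
  have "2 * (3/4) * (3/4 - e) / (3/4 + (3/4 - e)) = 3/4 - e/2 - e\<^sup>2 / (3 - 2 * e)"
    and "2 * (1/4) * (1/4 + e) / (1/4 + (1/4 + e)) = 1/4 + e/2 - e\<^sup>2 / (1 + 2 * e)"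
    using e by (simp_all add: field_simps power2_eq_square)
  moreover have "e\<^sup>2 / (3 - 2 * e) \<le> e\<^sup>2" "e\<^sup>2 / (1 + 2 * e) \<le> e\<^sup>2"
    using e by (simp_all add: divide_le_eq)
  moreover have "2 * (3/4) * (3/4 - e) / (3/4 + (3/4 - e)) \<le> sqrt (3/4 * (3/4 - e))"
    "2 * (1/4) * (1/4 + e) / (1/4 + (1/4 + e)) \<le> sqrt (1/4 * (1/4 + e))"
    using e harmonic_mean_le_sqrt[of "3/4" "3/4 - e"] harmonic_mean_le_sqrt[of "1/4" "1/4 + e"]
    by simp_all
  moreover have "bhattacharyya UNIV (pmf (bernoulli_pmf (3/4))) (pmf (bernoulli_pmf (3/4 - e)))
      = sqrt (3/4 * (3/4 - e)) + sqrt (1/4 * (1/4 + e))"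
    using e by (simp add: bhattacharyya_def UNIV_bool)
  ultimately show ?thesis
    by linarith
qed

definition relative_difference :: "real \<Rightarrow> real \<Rightarrow> real" where
  "relative_difference x y = \<bar>x - y\<bar> / \<bar>x + y\<bar>"

lemma relative_difference_scale:
  "K \<noteq> 0 \<Longrightarrow> relative_difference (K * x) (K * y) = relative_difference x y"
  by (simp add: relative_difference_def flip: right_diff_distrib distrib_left)
    (simp add: abs_mult)

lemma relative_difference_inverse:
  "x \<noteq> 0 \<Longrightarrow> y \<noteq> 0 \<Longrightarrow> relative_difference (1 / x) (1 / y) = relative_difference x y"
  by (simp add: relative_difference_def field_simps abs_minus_commute add.commute)

lemma relative_difference_variance_ge:
  fixes e :: real
  assumes e: "0 < e" "e \<le> 1/4"
  shows "e / 4 \<le> relative_difference (3/4 * (1 - 3/4)) ((3/4 - e) * (1 - (3/4 - e)))"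
proof -
  have diff: "3/4 * (1 - 3/4) - (3/4 - e) * (1 - (3/4 - e)) = - (e/2 - e * e)"
    and sum: "3/4 * (1 - 3/4) + (3/4 - e) * (1 - (3/4 - e)) = 3/8 + e/2 - e * e"
    by (simp_all add: field_simps)
  have "e * e \<le> e / 4" "0 \<le> e * e * e"
    using e by (auto simp: mult_left_mono)
  moreover have "e / 4 * (3/8 + e/2 - e * e) = 3/32 * e + e * e / 8 - e * e * e / 4"
    by (simp add: algebra_simps)
  ultimately have key: "e / 4 * (3/8 + e/2 - e * e) \<le> e/2 - e * e"
    and nonneg: "0 \<le> e/2 - e * e" and pos: "0 < 3/8 + e/2 - e * e"
    using e by linarith+
  have "e / 4 \<le> (e/2 - e * e) / (3/8 + e/2 - e * e)"
    by (subst pos_le_divide_eq[OF pos]) (rule key)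
  then show ?thesis
    unfolding relative_difference_def diff sum
    by (simp only: abs_minus_cancel abs_of_nonneg[OF nonneg] abs_of_pos[OF pos])
qed

definition distance_costs :: "((real \<Rightarrow> real) \<times> real) set" where
  "distance_costs = {((\<lambda>p. 1 - p\<^sup>2 - (1 - p)\<^sup>2), 1),
                     ((\<lambda>p. 2 * sqrt (p * (1 - p))), 1/2),
                     ((\<lambda>p. sqrt (1/p - 1) + sqrt (1/(1 - p) - 1)), 1/2)}"

lemma distance_cost_powr_cases:
  assumes "(c, \<alpha>) \<in> distance_costs"
  obtains K where "K > 0" "\<And>p. 0 < p \<Longrightarrow> p < 1 \<Longrightarrow> c p powr (1/\<alpha>) = K * (p * (1 - p))"
    | "\<And>p. 0 < p \<Longrightarrow> p < 1 \<Longrightarrow> c p powr (1/\<alpha>) = 1 / (p * (1 - p))"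
proof -
  consider "c = (\<lambda>p. 1 - p\<^sup>2 - (1 - p)\<^sup>2)" "\<alpha> = 1"
    | "c = (\<lambda>p. 2 * sqrt (p * (1 - p)))" "\<alpha> = 1/2"
    | "c = (\<lambda>p. sqrt (1/p - 1) + sqrt (1/(1 - p) - 1))" "\<alpha> = 1/2"
    using assms by (auto simp: distance_costs_def)
  then show ?thesis
  proof cases
    case 1
    have "c p powr (1/\<alpha>) = 2 * (p * (1 - p))" if "0 < p" "p < 1" for p
      using that by (simp add: 1 power2_eq_square algebra_simps)
    then show ?thesis by (intro that(1)[of 2]) auto
  next
    case 2
    have "c p powr (1/\<alpha>) = 4 * (p * (1 - p))" if "0 < p" "p < 1" for p
      using that by (simp add: 2 power_mult_distrib)
    then show ?thesis by (intro that(1)[of 4]) auto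
  next
    case 3
    have "c p powr (1/\<alpha>) = 1 / (p * (1 - p))" if p: "0 < p" "p < 1" for p
    proof -
      have nonneg: "1/p - 1 \<ge> 0" "1/(1 - p) - 1 \<ge> 0"
        using p by (simp_all add: field_simps)
      have "(1/p - 1) * (1/(1 - p) - 1) = 1"
        using p by (simp add: field_simps)
      then have "(sqrt (1/p - 1) + sqrt (1/(1 - p) - 1))\<^sup>2 = 1/p + 1/(1 - p)"
        using nonneg by (simp add: power2_sum real_sqrt_mult[symmetric])
      also have "\<dots> = 1 / (p * (1 - p))"
        using p by (simp add: field_simps)
      finally show ?thesis
        using nonneg by (simp add: 3)
    qed
    then show ?thesis by (rule that(2))
  qed
qed

lemma oracle_weight_relative_difference_ge:
  fixes e :: real
  assumes "(c, \<alpha>) \<in> distance_costs" and e: "0 < e" "e \<le> 1/4"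
  shows "e / 4 \<le> relative_difference (c (3/4) powr (1/\<alpha>)) (c (3/4 - e) powr (1/\<alpha>))"
  using assms(1)
proof (cases rule: distance_cost_powr_cases)
  case (1 K)
  have "c (3/4) powr (1/\<alpha>) = K * (3/4 * (1 - 3/4))"
    and "c (3/4 - e) powr (1/\<alpha>) = K * ((3/4 - e) * (1 - (3/4 - e)))"
    using e by (simp_all add: 1)
  moreover have "K \<noteq> 0"
    using \<open>K > 0\<close> by simp
  ultimately show ?thesis
    using relative_difference_variance_ge[OF e] relative_difference_scale by metis
next
  case 2
  have "c (3/4) powr (1/\<alpha>) = 1 / (3/4 * (1 - 3/4))"
    and "c (3/4 - e) powr (1/\<alpha>) = 1 / ((3/4 - e) * (1 - (3/4 - e)))"
    using e by (simp_all add: 2)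
  moreover have "3/4 * (1 - 3/4) \<noteq> (0::real)" "(3/4 - e) * (1 - (3/4 - e)) \<noteq> 0"
    using e by simp_all
  ultimately show ?thesis
    using relative_difference_variance_ge[OF e] relative_difference_inverse by metis
qed

lemma oracle_alloc_swap_diff:
  assumes "q2 True = q1 False" "q2 False = q1 True"
  shows "\<bar>oracle_alloc c \<alpha> n q1 True - oracle_alloc c \<alpha> n q2 True\<bar>
    = real n * relative_difference (c (q1 True) powr (1/\<alpha>)) (c (q1 False) powr (1/\<alpha>))"
  by (simp add: oracle_alloc_def relative_difference_def assms add.commute
      flip: diff_divide_distrib right_diff_distrib) (simp add: abs_mult)

lemma alloc_err_swapped_instances_ge:
  fixes e :: real
  assumes cost: "(c, \<alpha>) \<in> distance_costs" and e: "0 < e" "e \<le> 1/4"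
    and q1: "q1 = (\<lambda>i. if i then 3/4 else 3/4 - e)"
    and q2: "q2 = (\<lambda>i. if i then 3/4 - e else 3/4)"
  shows "real n * e / 8 * (1 - 2 * e\<^sup>2) ^ (2 * n)
    \<le> alloc_err c \<alpha> n \<pi> q1 True + alloc_err c \<alpha> n \<pi> q2 True"
proof -
  define \<beta> where "\<beta> = bhattacharyya UNIV (pmf (bernoulli_pmf (3/4))) (pmf (bernoulli_pmf (3/4 - e)))"
  have arm: "bhattacharyya UNIV (pmf (bernoulli_pmf (q1 a))) (pmf (bernoulli_pmf (q2 a))) = \<beta>" for a
    by (cases a) (simp_all add: q1 q2 \<beta>_def bhattacharyya_commute)
  have nonneg: "0 \<le> 1 - 2 * e\<^sup>2"
    using mult_mono[of e "1/4" e "1/4"] e by (simp add: power2_eq_square)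
  have "(1 - 2 * e\<^sup>2) ^ (2 * n) \<le> \<beta> ^ (2 * n)"
    using bhattacharyya_bernoulli_ge[OF e] nonneg by (intro power_mono) (simp_all add: \<beta>_def)
  also have "\<dots> = (bhattacharyya (histories n) (pmf (hist \<pi> q1 n)) (pmf (hist \<pi> q2 n)))\<^sup>2"
    by (simp add: bhattacharyya_hist[OF arm] power_mult mult.commute[of 2])
  finally have overlap: "(1 - 2 * e\<^sup>2) ^ (2 * n)
      \<le> (bhattacharyya (histories n) (pmf (hist \<pi> q1 n)) (pmf (hist \<pi> q2 n)))\<^sup>2" .
  have "e / 4 \<le> relative_difference (c (q1 True) powr (1/\<alpha>)) (c (q1 False) powr (1/\<alpha>))"
    using oracle_weight_relative_difference_ge[OF cost e] by (simp add: q1)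
  then have "real n * (e / 4)
      \<le> real n * relative_difference (c (q1 True) powr (1/\<alpha>)) (c (q1 False) powr (1/\<alpha>))"
    by (rule mult_left_mono) simp
  then have gap: "real n * e / 4
      \<le> \<bar>oracle_alloc c \<alpha> n q1 True - oracle_alloc c \<alpha> n q2 True\<bar>"
    by (simp add: oracle_alloc_swap_diff q1 q2)
  have "real n * e / 8 * (1 - 2 * e\<^sup>2) ^ (2 * n) = real n * e / 4 * (1 - 2 * e\<^sup>2) ^ (2 * n) / 2"
    by simp
  also have "\<dots> \<le> \<bar>oracle_alloc c \<alpha> n q1 True - oracle_alloc c \<alpha> n q2 True\<bar> *
        (bhattacharyya (histories n) (pmf (hist \<pi> q1 n)) (pmf (hist \<pi> q2 n)))\<^sup>2 / 2"
    using nonneg by (intro divide_right_mono mult_mono gap overlap) simp_all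
  also have "\<dots> \<le> alloc_err c \<alpha> n \<pi> q1 True + alloc_err c \<alpha> n \<pi> q2 True"
    unfolding alloc_err_def
    by (rule two_point_lower_bound[OF finite_histories set_pmf_hist_subset set_pmf_hist_subset])
  finally show ?thesis .
qed

lemma alloc_err_inst_sum_ge:
  assumes "(c, \<alpha>) \<in> distance_costs" and n: "1 \<le> n"
  shows "3/128 * sqrt (real n)
    \<le> alloc_err c \<alpha> n \<pi> (inst1 n) True + alloc_err c \<alpha> n \<pi> (inst2 n) True"
proof -
  define e where "e = 1 / (4 * sqrt (real n))"
  have sqrt_n: "1 \<le> sqrt (real n)"
    using n by simp
  then have e: "0 < e" "e \<le> 1/4"
    by (simp_all add: e_def field_simps)
  have "2 * e\<^sup>2 \<le> 1"
    using mult_mono[of e "1/4" e "1/4"] e by (simp add: power2_eq_square)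
  then have "1 + real (2 * n) * (- 2 * e\<^sup>2) \<le> (1 + (- 2 * e\<^sup>2)) ^ (2 * n)"
    by (intro Bernoulli_inequality) simp
  moreover have "real (2 * n) * (2 * e\<^sup>2) = 1/4"
    using sqrt_n by (simp add: e_def field_simps power2_eq_square flip: real_sqrt_mult)
  ultimately have "3/4 \<le> (1 - 2 * e\<^sup>2) ^ (2 * n)"
    by simp
  then have "real n * e / 8 * (3/4) \<le> real n * e / 8 * (1 - 2 * e\<^sup>2) ^ (2 * n)"
    using e by (intro mult_left_mono) simp_all
  also have "\<dots> \<le> alloc_err c \<alpha> n \<pi> (inst1 n) True + alloc_err c \<alpha> n \<pi> (inst2 n) True"
    by (rule alloc_err_swapped_instances_ge[OF assms(1) e]) (simp_all only: inst1_def inst2_def e_def)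
  finally have "real n * e / 8 * (3/4)
      \<le> alloc_err c \<alpha> n \<pi> (inst1 n) True + alloc_err c \<alpha> n \<pi> (inst2 n) True" .
  moreover have "real n * e = sqrt (real n) / 4"
    using sqrt_n by (simp add: e_def field_simps flip: real_sqrt_mult)
  ultimately show ?thesis
    by simp
qed

theorem mainTheorem8:
  fixes c :: "real \<Rightarrow> real" and \<alpha> :: real
  assumes "(c, \<alpha>) \<in> {((\<lambda>p. 1 - p\<^sup>2 - (1 - p)\<^sup>2), 1),
                      ((\<lambda>p. 2 * sqrt (p * (1 - p))), 1/2),
                      ((\<lambda>p. sqrt (1/p - 1) + sqrt (1/(1 - p) - 1)), 1/2)}"
  shows "\<exists>C>0. \<forall>n\<ge>2. \<forall>\<pi> :: policy.
           max (max (alloc_err c \<alpha> n \<pi> (inst1 n) True) (alloc_err c \<alpha> n \<pi> (inst1 n) False))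
               (max (alloc_err c \<alpha> n \<pi> (inst2 n) True) (alloc_err c \<alpha> n \<pi> (inst2 n) False))
           \<ge> C * sqrt (real n)"
proof (intro exI[of _ "3/256"] conjI allI impI)
  fix n :: nat and \<pi> :: policy
  assume "2 \<le> n"
  have "(c, \<alpha>) \<in> distance_costs"
    using assms unfolding distance_costs_def .
  then have "3/128 * sqrt (real n)
      \<le> alloc_err c \<alpha> n \<pi> (inst1 n) True + alloc_err c \<alpha> n \<pi> (inst2 n) True"
    by (rule alloc_err_inst_sum_ge) (use \<open>2 \<le> n\<close> in simp)
  then show "3/256 * sqrt (real n) \<le>
      max (max (alloc_err c \<alpha> n \<pi> (inst1 n) True) (alloc_err c \<alpha> n \<pi> (inst1 n) False))
          (max (alloc_err c \<alpha> n \<pi> (inst2 n) True) (alloc_err c \<alpha> n \<pi> (inst2 n) False))"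
    by (simp add: max_def)
qed simp

end
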